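(* Let $\Gamma$ be a group that is nilpotent of class $\le n$, let $G:=\mathrm{Cay}(\Gamma,S)$ be a Cayley graph for a generating set $S$ containing two inequivalent elements, and let $r\ge 2^{n+1}$. Suppose that for all $g,h\in S$ with $g\not\equiv h$ there exists a morpheme of $\Gamma$ in $S$ of length at most $r$ that is magic in $g$ and $h$. Then $G$ has no $r$-local cutvertex.
   Context: A generating set excludes the neutral element $\mathbb{I}$ and is closed under inverses; $\mathrm{Cay}(\Gamma,S)$ is the simple graph on $\Gamma$ with edges $\{g,gs\}$. $a\equiv b$ means $a=b$ or $a=b^{-1}$. $\Gamma$ is nilpotent of class $\le n$ if $[g,h]_n=\mathbb{I}$ for all $g\not\equiv h$, where $[g,h]_1=gh^{-1}g^{-1}h$ and $[g,h]_n$ is the reduced form of $g[g,h]_{n-1}^{-1}g^{-1}[g,h]_{n-1}$. A morpheme of $\Gamma$ in $S$ is a nonempty word in $S$ evaluating to $\mathbb{I}$ none of whose nonempty proper contiguous subwords evaluates to $\mathbb{I}$. A word $u$ is magic in $g,h$ if $u$ and $u^{-1}$ together contain at least three of $gh,hg,g^{-1}h,hg^{-1}$ as contiguous subwords. The ball $B_r(v)$ is the subgraph of all vertices and edges on closed walks of length $\le r$ through $v$; $v$ is an $r$-local cutvertex if $B_r(v)-v$ is disconnected. *)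

theory Defs
  imports "HOL-Algebra.Algebra" "HOL-Library.Sublist"
begin

definition gequiv :: "('a, 'b) monoid_scheme \<Rightarrow> 'a \<Rightarrow> 'a \<Rightarrow> bool" where
  "gequiv G a b \<longleftrightarrow> a = b \<or> a = inv\<^bsub>G\<^esub> b"

definition generating_set :: "('a, 'b) monoid_scheme \<Rightarrow> 'a set \<Rightarrow> bool" where
  "generating_set G S \<longleftrightarrow> S \<subseteq> carrier G \<and> \<one>\<^bsub>G\<^esub> \<notin> S
     \<and> (\<forall>s\<in>S. inv\<^bsub>G\<^esub> s \<in> S) \<and> generate G S = carrier G"

(* iterated commutators: [g,h]_1 = g h^-1 g^-1 h,
   [g,h]_(k+1) = g [g,h]_k^-1 g^-1 [g,h]_k ; index 0 is unused (set to 1) *)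
fun itcomm :: "('a, 'b) monoid_scheme \<Rightarrow> 'a \<Rightarrow> 'a \<Rightarrow> nat \<Rightarrow> 'a" where
  "itcomm G g h 0 = \<one>\<^bsub>G\<^esub>"
| "itcomm G g h (Suc 0) = g \<otimes>\<^bsub>G\<^esub> inv\<^bsub>G\<^esub> h \<otimes>\<^bsub>G\<^esub> inv\<^bsub>G\<^esub> g \<otimes>\<^bsub>G\<^esub> h"
| "itcomm G g h (Suc (Suc k)) =
     g \<otimes>\<^bsub>G\<^esub> inv\<^bsub>G\<^esub> (itcomm G g h (Suc k)) \<otimes>\<^bsub>G\<^esub> inv\<^bsub>G\<^esub> g
       \<otimes>\<^bsub>G\<^esub> itcomm G g h (Suc k)"

(* nilpotent of class \<le> n (paper's definition; n \<ge> 1) *)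
definition nilpotent_le :: "('a, 'b) monoid_scheme \<Rightarrow> nat \<Rightarrow> bool" where
  "nilpotent_le G n \<longleftrightarrow> (\<forall>g\<in>carrier G. \<forall>h\<in>carrier G.
      \<not> gequiv G g h \<longrightarrow> itcomm G g h n = \<one>\<^bsub>G\<^esub>)"

definition word_eval :: "('a, 'b) monoid_scheme \<Rightarrow> 'a list \<Rightarrow> 'a" where
  "word_eval G w = foldr (\<lambda>x a. x \<otimes>\<^bsub>G\<^esub> a) w \<one>\<^bsub>G\<^esub>"

definition word_inv :: "('a, 'b) monoid_scheme \<Rightarrow> 'a list \<Rightarrow> 'a list" where
  "word_inv G w = rev (map (\<lambda>x. inv\<^bsub>G\<^esub> x) w)"

definition morpheme :: "('a, 'b) monoid_scheme \<Rightarrow> 'a set \<Rightarrow> 'a list \<Rightarrow> bool" where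
  "morpheme G S w \<longleftrightarrow> w \<noteq> [] \<and> set w \<subseteq> S \<and> word_eval G w = \<one>\<^bsub>G\<^esub>
     \<and> (\<forall>i j. i < j \<and> j \<le> length w \<and> (i, j) \<noteq> (0, length w)
            \<longrightarrow> word_eval G (take (j - i) (drop i w)) \<noteq> \<one>\<^bsub>G\<^esub>)"

definition magic_patterns :: "('a, 'b) monoid_scheme \<Rightarrow> 'a \<Rightarrow> 'a \<Rightarrow> nat \<Rightarrow> 'a list" where
  "magic_patterns G g h i = [[g, h], [h, g], [inv\<^bsub>G\<^esub> g, h], [h, inv\<^bsub>G\<^esub> g]] ! i"

definition magic :: "('a, 'b) monoid_scheme \<Rightarrow> 'a list \<Rightarrow> 'a \<Rightarrow> 'a \<Rightarrow> bool" where
  "magic G u g h \<longleftrightarrow> 3 \<le> card {i. i < 4 \<and>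
      (sublist (magic_patterns G g h i) u \<or> sublist (magic_patterns G g h i) (word_inv G u))}"

definition cay_adj :: "('a, 'b) monoid_scheme \<Rightarrow> 'a set \<Rightarrow> 'a \<Rightarrow> 'a \<Rightarrow> bool" where
  "cay_adj G S x y \<longleftrightarrow> x \<in> carrier G \<and> y \<in> carrier G \<and>
     (\<exists>s\<in>S. y = x \<otimes>\<^bsub>G\<^esub> s \<or> x = y \<otimes>\<^bsub>G\<^esub> s)"

(* closed walk through v as a vertex list p_0 ... p_k with p_0 = p_k = v; length k = length p - 1 *)
definition closed_walk :: "('v \<Rightarrow> 'v \<Rightarrow> bool) \<Rightarrow> 'v \<Rightarrow> 'v list \<Rightarrow> bool" where
  "closed_walk E v p \<longleftrightarrow> p \<noteq> [] \<and> hd p = v \<and> last p = v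
     \<and> (\<forall>i. Suc i < length p \<longrightarrow> E (p ! i) (p ! Suc i))"

definition ball_verts :: "('v \<Rightarrow> 'v \<Rightarrow> bool) \<Rightarrow> nat \<Rightarrow> 'v \<Rightarrow> 'v set" where
  "ball_verts E r v = {x. \<exists>p. closed_walk E v p \<and> length p \<le> Suc r \<and> x \<in> set p}"

definition ball_edges :: "('v \<Rightarrow> 'v \<Rightarrow> bool) \<Rightarrow> nat \<Rightarrow> 'v \<Rightarrow> ('v \<times> 'v) set" where
  "ball_edges E r v = {(x, y). \<exists>p i. closed_walk E v p \<and> length p \<le> Suc r
      \<and> Suc i < length p \<and> {x, y} = {p ! i, p ! Suc i}}"

definition local_cutvertex :: "('v \<Rightarrow> 'v \<Rightarrow> bool) \<Rightarrow> nat \<Rightarrow> 'v \<Rightarrow> bool" where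
  "local_cutvertex E r v \<longleftrightarrow>
     (let V = ball_verts E r v - {v};
          F = {(x, y) \<in> ball_edges E r v. x \<noteq> v \<and> y \<noteq> v}
      in \<exists>x\<in>V. \<exists>y\<in>V. (x, y) \<notin> F\<^sup>*)"

end

theory Submission
  imports Defs
begin

(* Every vertex x of B_r(v) - v lies on a closed walk through v of length at most r; following it
   from x to its next visit of v reaches a neighbour v s of v without passing through v. So it
   suffices that the neighbours of v are connected in B_r(v) - v. If [a, b] is a subword of a
   morpheme u of length at most r, the rotation of u starting at b traces a cycle through v that
   leaves through v b, returns through v a^-1 and avoids v in between, so v b and v a^-1 are
   connected. For inequivalent g, h a magic morpheme yields three of the four resulting connections
   among v g, v h, v g^-1, v h^-1, which already connect all four. *)

definition punctured_ball_edges :: "('v \<Rightarrow> 'v \<Rightarrow> bool) \<Rightarrow> nat \<Rightarrow> 'v \<Rightarrow> ('v \<times> 'v) set" where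
  "punctured_ball_edges E r v = {(x, y) \<in> ball_edges E r v. x \<noteq> v \<and> y \<noteq> v}"

lemma sym_punctured_ball_edges: "sym (punctured_ball_edges E r v)"
  unfolding sym_def punctured_ball_edges_def ball_edges_def by (simp add: insert_commute)

lemma punctured_ball_connected_sym:
  "(x, y) \<in> (punctured_ball_edges E r v)\<^sup>* \<Longrightarrow> (y, x) \<in> (punctured_ball_edges E r v)\<^sup>*"
  using sym_rtrancl[OF sym_punctured_ball_edges] by (rule symD)

lemma closed_walk_step_in_punctured_ball:
  assumes "closed_walk E v p" "length p \<le> Suc r" "Suc k < length p" "p ! k \<noteq> v" "p ! Suc k \<noteq> v"
  shows "(p ! k, p ! Suc k) \<in> punctured_ball_edges E r v"
  using assms unfolding punctured_ball_edges_def ball_edges_def by blast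

lemma closed_walk_segment_connected:
  assumes walk: "closed_walk E v p" "length p \<le> Suc r"
    and "i \<le> j" "j < length p" "\<And>k. i \<le> k \<Longrightarrow> k \<le> j \<Longrightarrow> p ! k \<noteq> v"
  shows "(p ! i, p ! j) \<in> (punctured_ball_edges E r v)\<^sup>*"
  using assms(3-5)
proof (induction j rule: dec_induct)
  case base
  then show ?case by simp
next
  case (step j)
  then have "(p ! j, p ! Suc j) \<in> punctured_ball_edges E r v"
    by (intro closed_walk_step_in_punctured_ball[OF walk]) auto
  with step show ?case by (simp add: rtrancl_into_rtrancl)
qed

lemma closed_walk_reaches_neighbour:
  assumes walk: "closed_walk E v p" "length p \<le> Suc r"
    and "k < length p" "p ! k \<noteq> v"
  shows "\<exists>y. E y v \<and> (p ! k, y) \<in> (punctured_ball_edges E r v)\<^sup>*"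
  using assms(3,4)
proof (induction "length p - k" arbitrary: k rule: less_induct)
  case less
  have "p \<noteq> []" "last p = v" using walk unfolding closed_walk_def by auto
  with less.prems have "k \<noteq> length p - 1" by (auto simp: last_conv_nth)
  with less.prems have k: "Suc k < length p" by linarith
  then have adj: "E (p ! k) (p ! Suc k)" using walk unfolding closed_walk_def by blast
  show ?case
  proof (cases "p ! Suc k = v")
    case True
    with adj show ?thesis by auto
  next
    case False
    have "length p - Suc k < length p - k" using k by simp
    with k False less.hyps obtain y where "E y v" "(p ! Suc k, y) \<in> (punctured_ball_edges E r v)\<^sup>*"
      by blast
    moreover have "(p ! k, p ! Suc k) \<in> punctured_ball_edges E r v"
      using closed_walk_step_in_punctured_ball[OF walk k] less.prems False by blast
    ultimately show ?thesis by (meson converse_rtrancl_into_rtrancl)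
  qed
qed

lemma not_local_cutvertexI:
  assumes "\<And>y z. E y v \<Longrightarrow> E z v \<Longrightarrow> (y, z) \<in> (punctured_ball_edges E r v)\<^sup>*"
  shows "\<not> local_cutvertex E r v"
proof
  let ?F = "punctured_ball_edges E r v"
  have reach: "\<exists>y. E y v \<and> (x, y) \<in> ?F\<^sup>*" if x: "x \<in> ball_verts E r v - {v}" for x
  proof -
    obtain p where p: "closed_walk E v p" "length p \<le> Suc r" "x \<in> set p" "x \<noteq> v"
      using x unfolding ball_verts_def by blast
    then obtain k where "k < length p" "p ! k = x" by (meson in_set_conv_nth)
    with closed_walk_reaches_neighbour[OF p(1,2)] p(4) show ?thesis by blast
  qed
  assume "local_cutvertex E r v"
  then obtain x x' where x: "x \<in> ball_verts E r v - {v}" "x' \<in> ball_verts E r v - {v}"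
    and disconnected: "(x, x') \<notin> ?F\<^sup>*"
    unfolding local_cutvertex_def punctured_ball_edges_def[symmetric] Let_def by blast
  obtain y y' where "E y v" "(x, y) \<in> ?F\<^sup>*" "E y' v" "(x', y') \<in> ?F\<^sup>*"
    using reach x by blast
  with assms have "(x, x') \<in> ?F\<^sup>*"
    by (meson punctured_ball_connected_sym rtrancl_trans)
  with disconnected show False ..
qed

lemma three_of_four_cases:
  assumes "3 \<le> card {i::nat. i < 4 \<and> Q i}"
  shows "Q 0 \<and> Q 1 \<and> Q 2 \<or> Q 0 \<and> Q 1 \<and> Q 3 \<or> Q 0 \<and> Q 2 \<and> Q 3 \<or> Q 1 \<and> Q 2 \<and> Q 3"
proof -
  have pair: "Q a \<or> Q b" if "a \<noteq> b" "a < 4" "b < 4" for a b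
  proof (rule ccontr)
    assume "\<not> (Q a \<or> Q b)"
    then have "{i. i < 4 \<and> Q i} \<subseteq> {0..<4} - {a, b}" by auto
    then have "card {i. i < 4 \<and> Q i} \<le> card ({0..<4} - {a, b})" by (intro card_mono) auto
    also have "\<dots> = 2" using that by (simp add: card_Diff_subset)
    finally show False using assms by simp
  qed
  show ?thesis
    using pair[of 0 1] pair[of 0 2] pair[of 0 3] pair[of 1 2] pair[of 1 3] pair[of 2 3] by auto
qed

definition word_walk :: "('a, 'b) monoid_scheme \<Rightarrow> 'a \<Rightarrow> 'a list \<Rightarrow> 'a list" where
  "word_walk G v w = map (\<lambda>k. v \<otimes>\<^bsub>G\<^esub> word_eval G (take k w)) [0..<Suc (length w)]"

lemma length_word_walk [simp]: "length (word_walk G v w) = Suc (length w)"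
  by (simp add: word_walk_def)

lemma nth_word_walk [simp]:
  "k \<le> length w \<Longrightarrow> word_walk G v w ! k = v \<otimes>\<^bsub>G\<^esub> word_eval G (take k w)"
  unfolding word_walk_def by (simp del: upt_Suc add: less_Suc_eq_le)

lemma sublist_word_inv: "sublist xs ys \<Longrightarrow> sublist (word_inv G xs) (word_inv G ys)"
  unfolding word_inv_def by (simp add: map_mono_sublist)

context group
begin

lemma word_eval_Nil [simp]: "word_eval G [] = \<one>"
  by (simp add: word_eval_def)

lemma word_eval_Cons [simp]: "word_eval G (x # xs) = x \<otimes> word_eval G xs"
  by (simp add: word_eval_def)

lemma word_eval_closed [simp]: "set xs \<subseteq> carrier G \<Longrightarrow> word_eval G xs \<in> carrier G"
  by (induction xs) auto

lemma word_eval_append: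
  "set xs \<subseteq> carrier G \<Longrightarrow> set ys \<subseteq> carrier G \<Longrightarrow>
    word_eval G (xs @ ys) = word_eval G xs \<otimes> word_eval G ys"
  by (induction xs) (auto simp: m_assoc)

lemma word_eval_take_Suc:
  assumes "set w \<subseteq> carrier G" "k < length w"
  shows "word_eval G (take (Suc k) w) = word_eval G (take k w) \<otimes> w ! k"
proof -
  have "set (take k w) \<subseteq> carrier G" using set_take_subset assms(1) by (rule order_trans)
  moreover have "w ! k \<in> carrier G" using assms nth_mem by blast
  ultimately show ?thesis using assms by (simp add: take_Suc_conv_app_nth word_eval_append)
qed

lemma word_eval_rotate:
  assumes "set xs \<subseteq> carrier G" "set ys \<subseteq> carrier G" "word_eval G (xs @ ys) = \<one>"
  shows "word_eval G (ys @ xs) = \<one>"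
proof -
  have "word_eval G xs \<otimes> word_eval G ys = \<one>" using assms by (simp add: word_eval_append)
  from inv_comm[OF this] have "word_eval G ys \<otimes> word_eval G xs = \<one>" using assms by simp
  then show ?thesis using assms by (simp add: word_eval_append)
qed

lemma word_inv_word_inv: "set w \<subseteq> carrier G \<Longrightarrow> word_inv G (word_inv G w) = w"
  unfolding word_inv_def by (induction w) auto

lemma set_word_inv_subset: "set w \<subseteq> carrier G \<Longrightarrow> set (word_inv G w) \<subseteq> carrier G"
  unfolding word_inv_def by auto

lemma morpheme_infix_ne_one:
  assumes "morpheme G S (P @ W @ Q)" "W \<noteq> []" "P @ Q \<noteq> []"
  shows "word_eval G W \<noteq> \<one>"
proof -
  let ?u = "P @ W @ Q"
  have "word_eval G (take (j - i) (drop i ?u)) \<noteq> \<one>"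
    if "i < j" "j \<le> length ?u" "(i, j) \<noteq> (0, length ?u)" for i j
    using assms(1) that unfolding morpheme_def by blast
  from this[of "length P" "length P + length W"] show ?thesis
    using assms(2,3) by simp
qed

lemma morpheme_rotation_prefix_ne_one:
  assumes S: "S \<subseteq> carrier G" and m: "morpheme G S (U @ V)"
    and k: "0 < k" "k < length U + length V"
  shows "word_eval G (take k (V @ U)) \<noteq> \<one>"
proof (cases "k \<le> length V")
  case True
  have "word_eval G (take k V) \<noteq> \<one>"
    by (rule morpheme_infix_ne_one[of S U _ "drop k V"]) (use m True k in auto)
  with True show ?thesis by simp
next
  case False
  define T D where "T = take (k - length V) U" and "D = drop (k - length V) U"
  have U: "U = T @ D" and TD: "T \<noteq> []" "D \<noteq> []"
    using False k by (auto simp: T_def D_def)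
  have carrier: "set T \<subseteq> carrier G" "set D \<subseteq> carrier G" "set V \<subseteq> carrier G"
    using m S U unfolding morpheme_def by auto
  have TDV: "morpheme G S (T @ D @ V)" using m U by simp
  have D_ne_one: "word_eval G D \<noteq> \<one>"
    by (rule morpheme_infix_ne_one[OF TDV]) (use TD in simp_all)
  from TDV have TDV_one: "word_eval G (T @ D @ V) = \<one>" unfolding morpheme_def by blast
  \<comment> \<open>A trivial prefix \<open>V @ T\<close> would force the proper subword \<open>D\<close> of \<open>T @ D @ V\<close> to be trivial.\<close>
  show ?thesis
  proof
    assume "word_eval G (take k (V @ U)) = \<one>"
    moreover have "take k (V @ U) = V @ T" using False by (simp add: T_def)
    ultimately have "word_eval G (T @ V) = \<one>" using carrier word_eval_rotate by simp
    then have "word_eval G T \<otimes> (word_eval G D \<otimes> word_eval G V) = word_eval G T \<otimes> word_eval G V"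
      using TDV_one carrier by (simp add: word_eval_append)
    then have "word_eval G D \<otimes> word_eval G V = word_eval G V" using carrier by (simp add: Units_eq)
    with carrier D_ne_one show False by simp
  qed
qed

lemma closed_walk_word_walk:
  assumes S: "S \<subseteq> carrier G" and w: "set w \<subseteq> S" "word_eval G w = \<one>" and v: "v \<in> carrier G"
  shows "closed_walk (cay_adj G S) v (word_walk G v w)"
  unfolding closed_walk_def
proof (intro conjI allI impI)
  let ?p = "word_walk G v w"
  have w_carrier: "set w \<subseteq> carrier G" using w S by auto
  show "?p \<noteq> []" by (simp add: word_walk_def)
  then show "hd ?p = v" "last ?p = v" using v w by (simp_all add: hd_conv_nth last_conv_nth)
  fix i assume "Suc i < length ?p"
  then have i: "i < length w" by simp
  then have "w ! i \<in> S" using w nth_mem by blast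
  moreover have "?p ! Suc i = ?p ! i \<otimes> w ! i"
    using i v w_carrier set_take_subset[of i w] S \<open>w ! i \<in> S\<close>
    by (auto simp: word_eval_take_Suc m_assoc)
  moreover have "?p ! i \<in> carrier G"
    using i v w_carrier set_take_subset[of i w] by auto
  ultimately show "cay_adj G S (?p ! i) (?p ! Suc i)"
    unfolding cay_adj_def using S by auto
qed

lemma morpheme_pattern_connected:
  assumes S: "S \<subseteq> carrier G" and m: "morpheme G S u" and len: "length u \<le> r"
    and ab: "sublist [a, b] u" and v: "v \<in> carrier G"
  shows "(v \<otimes> b, v \<otimes> inv a) \<in> (punctured_ball_edges (cay_adj G S) r v)\<^sup>*"
proof -
  obtain A B where u: "u = (A @ [a]) @ (b # B)" using ab by (auto simp: sublist_def)
  define w where "w = (b # B) @ (A @ [a])"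
  define p where "p = word_walk G v w"
  have "set w \<subseteq> S" using m u unfolding morpheme_def w_def by auto
  then have w_carrier: "set w \<subseteq> carrier G" and ab_carrier: "a \<in> carrier G" "b \<in> carrier G"
    using S by (auto simp: w_def)
  have "word_eval G w = \<one>"
    using m u w_carrier word_eval_rotate[of "A @ [a]" "b # B"] unfolding morpheme_def w_def by auto
  then have walk: "closed_walk (cay_adj G S) v p"
    using closed_walk_word_walk S \<open>set w \<subseteq> S\<close> v by (simp add: p_def)
  have length_w: "length w = length u" "2 \<le> length u" by (simp_all add: u w_def)
  have "p ! k \<noteq> v" if "1 \<le> k" "k \<le> length u - 1" for k
  proof -
    have "word_eval G (take k w) \<noteq> \<one>"
      using morpheme_rotation_prefix_ne_one[OF S, of "A @ [a]" "b # B" k] m u that length_w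
      by (simp add: w_def)
    moreover have "set (take k w) \<subseteq> carrier G" using w_carrier set_take_subset by fast
    ultimately show ?thesis using that length_w v by (simp add: p_def)
  qed
  then have "(p ! 1, p ! (length u - 1)) \<in> (punctured_ball_edges (cay_adj G S) r v)\<^sup>*"
    using closed_walk_segment_connected[OF walk] len length_w by (simp add: p_def)
  moreover have "p ! 1 = v \<otimes> b" using length_w ab_carrier by (simp add: p_def w_def)
  moreover have "p ! (length u - 1) = v \<otimes> inv a"
  proof -
    have "take (length u - 1) w = b # B @ A" by (simp add: u w_def)
    moreover have "inv a = word_eval G (b # B @ A)"
      using \<open>word_eval G w = \<one>\<close> w_carrier ab_carrier
      by (intro inv_equality) (auto simp: w_def word_eval_append m_assoc)
    ultimately show ?thesis using length_w by (simp add: p_def)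
  qed
  ultimately show ?thesis by simp
qed

lemma morpheme_or_inverse_pattern_connected:
  assumes S: "S \<subseteq> carrier G" and m: "morpheme G S u" and len: "length u \<le> r"
    and ab: "sublist [a, b] u \<or> sublist [a, b] (word_inv G u)" and v: "v \<in> carrier G"
  shows "(v \<otimes> b, v \<otimes> inv a) \<in> (punctured_ball_edges (cay_adj G S) r v)\<^sup>*"
  using ab
proof
  assume "sublist [a, b] u"
  then show ?thesis using morpheme_pattern_connected[OF S m len _ v] by blast
next
  assume ab': "sublist [a, b] (word_inv G u)"
  have u_carrier: "set u \<subseteq> carrier G" using m S unfolding morpheme_def by auto
  then have "sublist (word_inv G [a, b]) u"
    using sublist_word_inv[OF ab', of G] by (simp add: word_inv_word_inv)
  then have "sublist [inv b, inv a] u" by (simp add: word_inv_def)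
  moreover have "b \<in> carrier G"
    using set_mono_sublist[OF ab'] set_word_inv_subset[OF u_carrier] by auto
  ultimately show ?thesis
    using morpheme_pattern_connected[OF S m len _ v] punctured_ball_connected_sym by fastforce
qed

lemma magic_morpheme_connected:
  assumes S: "S \<subseteq> carrier G" and m: "morpheme G S u" and len: "length u \<le> r"
    and magic: "magic G u g h" and v: "v \<in> carrier G" and g: "g \<in> S"
  shows "(v \<otimes> g, v \<otimes> h) \<in> (punctured_ball_edges (cay_adj G S) r v)\<^sup>*"
    and "(v \<otimes> g, v \<otimes> inv g) \<in> (punctured_ball_edges (cay_adj G S) r v)\<^sup>*"
proof -
  let ?R = "\<lambda>x y. (x, y) \<in> (punctured_ball_edges (cay_adj G S) r v)\<^sup>*"
  let ?Q = "\<lambda>i. sublist (magic_patterns G g h i) u \<or> sublist (magic_patterns G g h i) (word_inv G u)"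
  have "g \<in> carrier G" using g S by auto
  note pattern = morpheme_or_inverse_pattern_connected[OF S m len _ v]
  have "?Q 0 \<Longrightarrow> ?R (v \<otimes> h) (v \<otimes> inv g)" "?Q 1 \<Longrightarrow> ?R (v \<otimes> g) (v \<otimes> inv h)"
    "?Q 2 \<Longrightarrow> ?R (v \<otimes> h) (v \<otimes> g)" "?Q 3 \<Longrightarrow> ?R (v \<otimes> inv g) (v \<otimes> inv h)"
    using pattern[of g h] pattern[of h g] pattern[of "inv g" h] pattern[of h "inv g"] \<open>g \<in> carrier G\<close>
    by (simp_all add: magic_patterns_def)
  \<comment> \<open>These are the four edges of a 4-cycle on \<open>v g, v h, v g\<inverse>, v h\<inverse>\<close>; any three of them connect it.\<close>
  moreover have "?Q 0 \<and> ?Q 1 \<and> ?Q 2 \<or> ?Q 0 \<and> ?Q 1 \<and> ?Q 3 \<or> ?Q 0 \<and> ?Q 2 \<and> ?Q 3 \<or> ?Q 1 \<and> ?Q 2 \<and> ?Q 3"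
    using magic unfolding magic_def by (rule three_of_four_cases)
  ultimately show "?R (v \<otimes> g) (v \<otimes> h)" "?R (v \<otimes> g) (v \<otimes> inv g)"
    by (meson punctured_ball_connected_sym rtrancl_trans)+
qed

lemma not_gequiv_one_of:
  assumes "\<not> gequiv G a b" "a \<in> carrier G" "b \<in> carrier G" "g \<in> carrier G"
  shows "\<not> gequiv G g a \<or> \<not> gequiv G g b"
  using assms unfolding gequiv_def by auto

lemma cay_adj_neighbour:
  assumes "generating_set G S" "cay_adj G S y v"
  shows "\<exists>s\<in>S. y = v \<otimes> s"
proof -
  have S: "S \<subseteq> carrier G" "\<forall>s\<in>S. inv s \<in> S"
    using assms(1) unfolding generating_set_def by auto
  obtain s where s: "s \<in> S" "y = v \<otimes> s \<or> v = y \<otimes> s" and y: "y \<in> carrier G"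
    using assms(2) unfolding cay_adj_def by blast
  have "v = y \<otimes> s \<Longrightarrow> y = v \<otimes> inv s" using s(1) S y by (auto simp: m_assoc)
  with s S show ?thesis by blast
qed

lemma cayley_neighbours_connected:
  assumes gen: "generating_set G S" and ex: "\<exists>g\<in>S. \<exists>h\<in>S. \<not> gequiv G g h"
    and magic: "\<forall>g\<in>S. \<forall>h\<in>S. \<not> gequiv G g h \<longrightarrow>
      (\<exists>u. morpheme G S u \<and> length u \<le> r \<and> magic G u g h)"
    and v: "v \<in> carrier G" and s: "s \<in> S" and t: "t \<in> S"
  shows "(v \<otimes> s, v \<otimes> t) \<in> (punctured_ball_edges (cay_adj G S) r v)\<^sup>*"
proof -
  have S: "S \<subseteq> carrier G" using gen unfolding generating_set_def by blast
  note connected = magic_morpheme_connected[OF S _ _ _ v]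
  show ?thesis
  proof (cases "gequiv G s t")
    case False
    with magic s t connected(1) show ?thesis by blast
  next
    case True
    obtain h where "h \<in> S" "\<not> gequiv G s h"
      using ex not_gequiv_one_of s S by blast
    with magic s connected(2) have "(v \<otimes> s, v \<otimes> inv s) \<in> (punctured_ball_edges (cay_adj G S) r v)\<^sup>*"
      by blast
    with True show ?thesis unfolding gequiv_def
      using s t S by (auto simp: subset_iff)
  qed
qed

end

theorem lemma4p2:
  fixes G :: "('a, 'b) monoid_scheme" and S :: "'a set" and n r :: nat
  assumes "group G"
    and "1 \<le> n"
    and "nilpotent_le G n"
    and "generating_set G S"
    and "\<exists>g\<in>S. \<exists>h\<in>S. \<not> gequiv G g h"
    and "2 ^ (n + 1) \<le> r"
    and "\<forall>g\<in>S. \<forall>h\<in>S. \<not> gequiv G g h \<longrightarrow>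
           (\<exists>u. morpheme G S u \<and> length u \<le> r \<and> magic G u g h)"
  shows "\<forall>v\<in>carrier G. \<not> local_cutvertex (cay_adj G S) r v"
proof
  interpret group G by (fact assms(1))
  fix v assume v: "v \<in> carrier G"
  show "\<not> local_cutvertex (cay_adj G S) r v"
  proof (rule not_local_cutvertexI)
    fix y z assume "cay_adj G S y v" "cay_adj G S z v"
    then obtain s t where "s \<in> S" "t \<in> S" "y = v \<otimes>\<^bsub>G\<^esub> s" "z = v \<otimes>\<^bsub>G\<^esub> t"
      using cay_adj_neighbour[OF assms(4)] by metis
    then show "(y, z) \<in> (punctured_ball_edges (cay_adj G S) r v)\<^sup>*"
      using cayley_neighbours_connected[OF assms(4,5,7) v] by simp
  qed
qed

end
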